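(* Let $X$ be a non-empty set, $R$ a binary relation on $X$, and $\tau$ a compact topology on $X$. Suppose $R$ is upper tc-semicontinuous with respect to $\tau$. Then the family $\mu(\Xi,\widetilde{R})$ of $\widetilde{R}$-maximal strong components of $(X,R)$ is non-empty.
   Context: For a binary relation $R$ on $X$, the transitive closure $\overline{R}$ is defined by: $x\overline{R}y$ iff there exist $K\ge 1$ and $x_0,\dots,x_K\in X$ with $x_0=x$, $x_K=y$, and $x_{k-1}Rx_k$ for all $k\in\{1,\dots,K\}$. $R$ is upper tc-semicontinuous with respect to $\tau$ if for every $x\in X$ the set $\{y\in X: x\overline{R}y\}$ is open in $\tau$. A topology is compact if every open cover of $X$ has a finite subcover. Strong components: define the equivalence relation $x\sim y$ iff $x=y$ or ($x\overline{R}y$ and $y\overline{R}x$). The ground sets of the strong components of $(X,R)$ are the equivalence classes of $\sim$ (so an element lying on no cycle forms a singleton component); they partition $X$. Let $\Xi=\{X_i : i\in I\}$ be the set of these classes. The contraction of $(X,R)$ is $(\Xi,\widetilde{R})$, where $X_i\widetilde{R}X_j$ iff there exist $x\in X_i$, $y\in X_j$ with $xRy$. A class $X_i\in\Xi$ is $\widetilde{R}$-maximal if there is no $X_j\in\Xi$ with $X_j\ne X_i$ and $X_j\widetilde{R}X_i$. $\mu(\Xi,\widetilde{R})$ denotes the family of $\widetilde{R}$-maximal classes in $\Xi$. *)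

theory Defs
  imports "HOL-Analysis.Abstract_Topology"
begin

definition upper_tc_semicontinuous :: "'a set \<Rightarrow> ('a \<times> 'a) set \<Rightarrow> 'a topology \<Rightarrow> bool" where
  "upper_tc_semicontinuous X R \<tau> \<longleftrightarrow> (\<forall>x\<in>X. openin \<tau> {y \<in> X. (x, y) \<in> R\<^sup>+})"

definition strong_equiv :: "'a set \<Rightarrow> ('a \<times> 'a) set \<Rightarrow> ('a \<times> 'a) set" where
  "strong_equiv X R = {(x, y). x \<in> X \<and> y \<in> X \<and>
      (x = y \<or> ((x, y) \<in> R\<^sup>+ \<and> (y, x) \<in> R\<^sup>+))}"

definition strong_components :: "'a set \<Rightarrow> ('a \<times> 'a) set \<Rightarrow> 'a set set" where
  "strong_components X R = X // strong_equiv X R"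

definition contraction_rel :: "'a set \<Rightarrow> ('a \<times> 'a) set \<Rightarrow> ('a set \<times> 'a set) set" where
  "contraction_rel X R = {(A, B). A \<in> strong_components X R \<and> B \<in> strong_components X R \<and>
      (\<exists>x\<in>A. \<exists>y\<in>B. (x, y) \<in> R)}"

definition maximal_components :: "'a set \<Rightarrow> ('a \<times> 'a) set \<Rightarrow> 'a set set" where
  "maximal_components X R = {C \<in> strong_components X R.
      \<not> (\<exists>D \<in> strong_components X R. D \<noteq> C \<and> (D, C) \<in> contraction_rel X R)}"

end

theory Submission
  imports Defs
begin

text \<open>Call \<open>x\<close> a top element if everything reaching \<open>x\<close> is reached back from \<open>x\<close>.
  The strong component of a top element is \<open>\<widetilde>R\<close>-maximal, so it suffices to find one.
  Suppose none exists. Then the open sets \<open>{y. x R\<^sup>+ y}\<close> cover \<open>X\<close>, so finitely many of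
  them, with centres in a finite set \<open>F\<close>, already do. Take \<open>k\<close> maximal in \<open>F\<close> for the
  preorder \<open>R\<^sup>+\<close>, and some \<open>z\<close> with \<open>z R\<^sup>+ k\<close> but not \<open>k R\<^sup>+ z\<close>. Some \<open>j \<in> F\<close> has
  \<open>j R\<^sup>+ z\<close>, hence \<open>j R\<^sup>+ k\<close>, hence \<open>k R\<^sup>+ j\<close> by maximality, hence \<open>k R\<^sup>+ z\<close>.\<close>

lemma equiv_strong_equiv: "equiv X (strong_equiv X R)"
  unfolding equiv_def refl_on_def sym_def trans_def strong_equiv_def
  by (auto intro: trancl_trans)

lemma finite_trans_has_maximal:
  assumes "trans r" "finite F" "F \<noteq> {}"
  shows "\<exists>k\<in>F. \<forall>j\<in>F. (j, k) \<in> r \<longrightarrow> (k, j) \<in> r"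
  using assms(2,3)
proof (induction F rule: finite_ne_induct)
  case (singleton a)
  show ?case by simp
next
  case (insert a F)
  then obtain k where k: "k \<in> F" "\<forall>j\<in>F. (j, k) \<in> r \<longrightarrow> (k, j) \<in> r" by blast
  show ?case
  proof (cases "(a, k) \<in> r \<and> (k, a) \<notin> r")
    case True
    have "(a, j) \<in> r" if "j \<in> F" "(j, a) \<in> r" for j
      using that k True \<open>trans r\<close> by (meson transD)
    then show ?thesis by blast
  next
    case False
    then show ?thesis using k by blast
  qed
qed

lemma trancl_top_element_exists:
  assumes "X \<noteq> {}" "R \<subseteq> X \<times> X" "topspace \<tau> = X" "compact_space \<tau>"
    and "upper_tc_semicontinuous X R \<tau>"
  shows "\<exists>x\<in>X. \<forall>z. (z, x) \<in> R\<^sup>+ \<longrightarrow> (x, z) \<in> R\<^sup>+"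
proof (rule ccontr)
  assume "\<not> ?thesis"
  then have below: "\<exists>z. (z, x) \<in> R\<^sup>+ \<and> (x, z) \<notin> R\<^sup>+" if "x \<in> X" for x
    using that by blast
  have in_X: "z \<in> X" if "(z, x) \<in> R\<^sup>+" for z x
    using that trancl_subset_Sigma[OF assms(2)] by blast
  define U where "U z = {y \<in> X. (z, y) \<in> R\<^sup>+}" for z
  have "openin \<tau> V" if "V \<in> U ` X" for V
    using that assms(5) unfolding upper_tc_semicontinuous_def U_def by auto
  moreover have "topspace \<tau> \<subseteq> \<Union>(U ` X)"
    using below in_X assms(3) unfolding U_def by fastforce
  ultimately obtain B where B: "finite B" "B \<subseteq> U ` X" "topspace \<tau> \<subseteq> \<Union>B"
    using assms(4) unfolding compact_space_def compactin_def by metis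
  then obtain F where F: "F \<subseteq> X" "finite F" "B = U ` F"
    by (meson finite_subset_image)
  with B(3) assms(1,3) have "F \<noteq> {}" by auto
  with F(2) obtain k where k: "k \<in> F" "\<forall>j\<in>F. (j, k) \<in> R\<^sup>+ \<longrightarrow> (k, j) \<in> R\<^sup>+"
    using finite_trans_has_maximal[OF trans_trancl] by blast
  obtain z where z: "(z, k) \<in> R\<^sup>+" "(k, z) \<notin> R\<^sup>+"
    using below k(1) F(1) by blast
  obtain j where j: "j \<in> F" "(j, z) \<in> R\<^sup>+"
    using B(3) F(3) assms(3) in_X[OF z(1)] unfolding U_def by auto
  then have "(k, j) \<in> R\<^sup>+" using k z(1) by (meson trancl_trans)
  with j(2) z(2) show False by (meson trancl_trans)
qed

lemma strong_class_of_top_element_maximal: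
  assumes R: "R \<subseteq> X \<times> X" and x: "x \<in> X"
    and top: "\<forall>z. (z, x) \<in> R\<^sup>+ \<longrightarrow> (x, z) \<in> R\<^sup>+"
  shows "strong_equiv X R `` {x} \<in> maximal_components X R"
proof -
  let ?C = "strong_equiv X R `` {x}"
  have C: "?C \<in> strong_components X R"
    unfolding strong_components_def using x by (rule quotientI)
  have "D = ?C" if D: "D \<in> strong_components X R" "(D, ?C) \<in> contraction_rel X R" for D
  proof -
    obtain a b where a: "a \<in> D" and b: "b \<in> ?C" and ab: "(a, b) \<in> R"
      using D(2) unfolding contraction_rel_def by blast
    have "b = x \<or> (b, x) \<in> R\<^sup>+" using b unfolding strong_equiv_def by auto
    with ab have ax: "(a, x) \<in> R\<^sup>+" by (auto intro: trancl_into_trancl2)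
    moreover have "a \<in> X" using ab R by auto
    ultimately have "a \<in> ?C" using top x unfolding strong_equiv_def by auto
    then show "D = ?C"
      using quotient_disj[OF equiv_strong_equiv] D(1) C a
      unfolding strong_components_def by blast
  qed
  with C show ?thesis unfolding maximal_components_def by blast
qed

theorem lemma2:
  fixes X :: "'a set" and R :: "('a \<times> 'a) set" and \<tau> :: "'a topology"
  assumes "X \<noteq> {}"
    and "R \<subseteq> X \<times> X"
    and "topspace \<tau> = X"
    and "compact_space \<tau>"
    and "upper_tc_semicontinuous X R \<tau>"
  shows "maximal_components X R \<noteq> {}"
proof -
  obtain x where "x \<in> X" "\<forall>z. (z, x) \<in> R\<^sup>+ \<longrightarrow> (x, z) \<in> R\<^sup>+"
    using trancl_top_element_exists[OF assms] by blast
  then show ?thesis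
    using strong_class_of_top_element_maximal[OF assms(2)] by blast
qed

end
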